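(* Let $n\ge1$, let $p>2$ be an integer, let $P(\partial_z)\in\mathbb{C}[\partial_z]$ ($z\in\mathbb{C}^n$) be a homogeneous partial differential operator of order $p$ with constant coefficients, and let $m$ be a function of order $p$. Then the series $$\sum_{j=0}^{\infty}\frac{P^j(\partial_z)\varphi(z)}{m(j)}t^{pj}$$ is not a generalised integral mean for any Borel measure $\mu$ of compact support in $\mathbb{R}^n$; that is, there is no finite complex Borel measure $\mu$ on $\mathbb{R}^n$ with compact support such that $M_\mu(\varphi;z,t)=\sum_{j\ge0}\frac{P^j(\partial_z)\varphi(z)}{m(j)}t^{pj}$ for all $\varphi$ holomorphic in a neighbourhood of the origin in $\mathbb{C}^n$ (and all $(z,t)$ near the origin).
   Context: A function of order $p>0$ is a function $m$ on $\mathbb{N}_0$ for which there exist $c,C>0$ with $c^j\Gamma(1+pj)\le m(j)\le C^j\Gamma(1+pj)$ for all $j\in\mathbb{N}_0$. For a finite complex Borel measure $\mu$ on $\mathbb{R}^n$ with compact support, the generalised integral mean of $\varphi$ is $M_\mu(\varphi;z,t)=\int_{\mathbb{R}^n}\varphi(z+ty)\,d\mu(y)$, $z\in\mathbb{C}^n$, $t\in\mathbb{C}$. *)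

theory Defs
  imports "HOL-Analysis.Analysis"
begin

definition order_fun :: "nat \<Rightarrow> (nat \<Rightarrow> real) \<Rightarrow> bool" where
  "order_fun p m \<longleftrightarrow> (\<exists>c C. c > 0 \<and> C > 0 \<and>
     (\<forall>j. c ^ j * Gamma (1 + real p * real j) \<le> m j \<and> m j \<le> C ^ j * Gamma (1 + real p * real j)))"

definition holo_on :: "(complex ^ 'n \<Rightarrow> complex) \<Rightarrow> (complex ^ 'n) set \<Rightarrow> bool" where
  "holo_on f S \<longleftrightarrow> open S \<and> (\<forall>z\<in>S. \<exists>D. (f has_derivative D) (at z) \<and>
      (\<forall>(c::complex) v. D (c *s v) = c * D v))"

definition pd :: "'n \<Rightarrow> (complex ^ 'n \<Rightarrow> complex) \<Rightarrow> complex ^ 'n \<Rightarrow> complex" where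
  "pd i f = (\<lambda>z. deriv (\<lambda>w. f (z + axis i w)) 0)"

text \<open>A fixed enumeration of the (finite) index type, used to order mixed partials
  (the order is irrelevant for holomorphic functions).\<close>
definition idx_list :: "'n::finite list" where
  "idx_list = (SOME xs. distinct xs \<and> set xs = UNIV)"

definition mderiv :: "('n::finite \<Rightarrow> nat) \<Rightarrow> (complex ^ 'n \<Rightarrow> complex) \<Rightarrow> complex ^ 'n \<Rightarrow> complex" where
  "mderiv \<alpha> f = foldr (\<lambda>i g. (pd i ^^ \<alpha> i) g) idx_list f"

definition Pop :: "(('n::finite \<Rightarrow> nat) \<Rightarrow> complex) \<Rightarrow> (complex ^ 'n \<Rightarrow> complex) \<Rightarrow> complex ^ 'n \<Rightarrow> complex" where
  "Pop c f = (\<lambda>z. \<Sum>\<alpha>\<in>{\<alpha>. c \<alpha> \<noteq> 0}. c \<alpha> * mderiv \<alpha> f z)"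

definition homog_poly :: "nat \<Rightarrow> (('n::finite \<Rightarrow> nat) \<Rightarrow> complex) \<Rightarrow> bool" where
  "homog_poly p c \<longleftrightarrow> finite {\<alpha>. c \<alpha> \<noteq> 0} \<and> {\<alpha>. c \<alpha> \<noteq> 0} \<noteq> {} \<and>
     (\<forall>\<alpha>. c \<alpha> \<noteq> 0 \<longrightarrow> (\<Sum>i\<in>UNIV. \<alpha> i) = p)"

definition cvec :: "real ^ 'n \<Rightarrow> complex ^ 'n" where
  "cvec y = (\<chi> i. complex_of_real (y $ i))"

text \<open>Generalised integral mean for the complex measure \<open>h d\<mu>\<close>.\<close>
definition gen_mean :: "(real ^ 'n) measure \<Rightarrow> (real ^ 'n \<Rightarrow> complex) \<Rightarrow> (complex ^ 'n \<Rightarrow> complex)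
     \<Rightarrow> complex ^ 'n \<Rightarrow> complex \<Rightarrow> complex" where
  "gen_mean M h \<phi> z t = (\<integral>y. \<phi> (z + t *s cvec y) * h y \<partial>M)"

end

theory Submission
  imports Defs "HOL-Complex_Analysis.Complex_Analysis"
begin

(* Test the identity at z = 0 on the plane waves (a . z)^k with real a. As
   P(d)^j (a . z)^k = P(a)^j k!/(k - p j)! (a . z)^(k - p j), it says that the moments of the
   pushforward of mu under y |-> a . y vanish in every degree not divisible by p, while the p-th
   moment is p! P(a) / m(1). For p > 2 the vanishing moments of degrees p i + 2 already force the
   p-th one to vanish: on the bounded support, s^p = s^2 (s^p)^((p-2)/p) is a uniform limit of
   linear combinations of the powers s^(p i + 2). Hence P(a) = 0 for all real a, which is
   impossible for a nonzero polynomial. *)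

lemma base_expansion_unique:
  fixes D D' :: "nat \<Rightarrow> nat"
  assumes "\<And>m. m < N \<Longrightarrow> D m < b" and "\<And>m. m < N \<Longrightarrow> D' m < b"
    and "(\<Sum>m<N. D m * b ^ m) = (\<Sum>m<N. D' m * b ^ m)" and "m < N"
  shows "D m = D' m"
  using assms
proof (induction N arbitrary: D D' m)
  case (Suc N)
  have split: "(\<Sum>m<Suc N. F m * b ^ m) = F 0 + b * (\<Sum>m<N. F (Suc m) * b ^ m)" for F :: "nat \<Rightarrow> nat"
    unfolding sum.lessThan_Suc_shift by (simp add: sum_distrib_left ac_simps)
  have "D 0 < b" and "D' 0 < b"
    using Suc.prems(1,2) by auto
  have eq: "D 0 + b * (\<Sum>m<N. D (Suc m) * b ^ m) = D' 0 + b * (\<Sum>m<N. D' (Suc m) * b ^ m)"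
    using Suc.prems(3) unfolding split .
  then have "(D 0 + b * (\<Sum>m<N. D (Suc m) * b ^ m)) mod b = (D' 0 + b * (\<Sum>m<N. D' (Suc m) * b ^ m)) mod b"
    by (rule arg_cong)
  then have "D 0 = D' 0"
    using \<open>D 0 < b\<close> \<open>D' 0 < b\<close> by simp
  with eq \<open>D 0 < b\<close> have "(\<Sum>m<N. D (Suc m) * b ^ m) = (\<Sum>m<N. D' (Suc m) * b ^ m)"
    by simp
  then have "D (Suc m') = D' (Suc m')" if "m' < N" for m'
    using Suc.IH[of "\<lambda>m. D (Suc m)" "\<lambda>m. D' (Suc m)" m'] Suc.prems(1,2) that by simp
  with \<open>D 0 = D' 0\<close> \<open>m < Suc N\<close> show ?case
    by (cases m) auto
qed simp

lemma square_mult_root_power: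
  assumes "2 \<le> p"
  shows "s\<^sup>2 * root p (s ^ p) ^ (p - 2) = (s::real) ^ p"
proof -
  have "root p (s ^ p) ^ (p - 2) = s ^ (p - 2)"
  proof (cases "odd p")
    case False
    then have "root p (s ^ p) = root p (\<bar>s\<bar> ^ p)"
      by (simp add: power_even_abs)
    also have "\<dots> = \<bar>s\<bar>"
      by (rule real_root_power_cancel) (use assms in auto)
    finally show ?thesis
      using False assms
      by (simp add: power_even_abs)
  qed (simp add: odd_real_root_power_cancel)
  moreover have "s ^ p = s\<^sup>2 * s ^ (p - 2)"
    using assms by (metis le_add_diff_inverse power_add)
  ultimately show ?thesis
    by simp
qed

(* Stone-Weierstrass for v |-> root p v ^ (p - 2), since u^p = u^2 * root p (u^p) ^ (p - 2). *)
lemma approx_power_by_shifted_powers: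
  fixes R d :: real
  assumes "2 \<le> p" and "0 < d"
  obtains q n where "\<And>u. \<bar>u\<bar> \<le> R \<Longrightarrow> \<bar>u ^ p - (\<Sum>i\<le>n. q i * u ^ (p * i + 2))\<bar> \<le> d"
proof -
  have "continuous_on {-(R ^ p)..R ^ p} (\<lambda>v. root p v ^ (p - 2))"
    by (intro continuous_intros)
  moreover have "0 < R\<^sup>2 + 1"
    by (simp add: add_nonneg_pos)
  ultimately obtain g where "real_polynomial_function g"
    and g: "\<And>v. v \<in> {-(R ^ p)..R ^ p} \<Longrightarrow> \<bar>root p v ^ (p - 2) - g v\<bar> < d / (R\<^sup>2 + 1)"
    using Stone_Weierstrass_real_polynomial_function[OF compact_Icc] \<open>0 < d\<close> by (metis divide_pos_pos)
  then obtain q n where g_eq: "g = (\<lambda>v. \<Sum>i\<le>n. q i * v ^ i)"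
    using real_polynomial_function_iff_sum by blast
  show thesis
  proof
    fix u :: real
    assume "\<bar>u\<bar> \<le> R"
    then have "\<bar>u ^ p\<bar> \<le> R ^ p" and "u\<^sup>2 \<le> R\<^sup>2"
      using power_mono[OF \<open>\<bar>u\<bar> \<le> R\<close> abs_ge_zero, of p] power_mono[OF \<open>\<bar>u\<bar> \<le> R\<close> abs_ge_zero, of 2]
      by (simp_all add: power_abs)
    have "(\<Sum>i\<le>n. q i * u ^ (p * i + 2)) = u\<^sup>2 * g (u ^ p)"
      unfolding g_eq sum_distrib_left by (intro sum.cong) (auto simp: power_add power_mult power2_eq_square)
    then have "\<bar>u ^ p - (\<Sum>i\<le>n. q i * u ^ (p * i + 2))\<bar> = \<bar>u\<^sup>2 * (root p (u ^ p) ^ (p - 2) - g (u ^ p))\<bar>"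
      using square_mult_root_power[OF assms(1), of u] by (simp add: right_diff_distrib)
    also have "\<dots> = u\<^sup>2 * \<bar>root p (u ^ p) ^ (p - 2) - g (u ^ p)\<bar>"
      by (simp add: abs_mult)
    also have "\<dots> \<le> R\<^sup>2 * (d / (R\<^sup>2 + 1))"
      using g[of "u ^ p"] \<open>\<bar>u ^ p\<bar> \<le> R ^ p\<close> \<open>u\<^sup>2 \<le> R\<^sup>2\<close>
      by (intro mult_mono) (auto simp: abs_le_iff)
    also have "\<dots> \<le> d"
      using \<open>0 < d\<close> \<open>0 < R\<^sup>2 + 1\<close> by (simp add: divide_simps)
    finally show "\<bar>u ^ p - (\<Sum>i\<le>n. q i * u ^ (p * i + 2))\<bar> \<le> d" .
  qed
qed

lemma integrable_power_mult_bounded: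
  fixes h :: "'a \<Rightarrow> complex" and s :: "'a \<Rightarrow> real"
  assumes "integrable M h" and "s \<in> borel_measurable M" and bound: "AE y in M. \<bar>s y\<bar> \<le> R"
  shows "integrable M (\<lambda>y. complex_of_real (s y) ^ k * h y)"
proof (rule Bochner_Integration.integrable_bound)
  show "integrable M (\<lambda>y. complex_of_real (R ^ k) * h y)"
    using assms(1) by simp
  show "(\<lambda>y. complex_of_real (s y) ^ k * h y) \<in> borel_measurable M"
    using assms(1,2) by measurable
  show "AE y in M. norm (complex_of_real (s y) ^ k * h y) \<le> norm (complex_of_real (R ^ k) * h y)"
    using bound
  proof eventually_elim
    case (elim y)
    then have "\<bar>s y\<bar> ^ k \<le> \<bar>R\<bar> ^ k"
      by (intro power_mono) auto
    then show ?case
      by (auto simp: norm_mult norm_power intro!: mult_right_mono)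
  qed
qed

lemma norm_integral_power_mult_le:
  fixes h :: "'a \<Rightarrow> complex" and s :: "'a \<Rightarrow> real"
  assumes h: "integrable M h" and s: "s \<in> borel_measurable M" and bound: "AE y in M. \<bar>s y\<bar> \<le> R"
    and "2 \<le> p" and moments: "\<And>i. (\<integral>y. complex_of_real (s y) ^ (p * i + 2) * h y \<partial>M) = 0"
    and "d > 0"
  shows "norm (\<integral>y. complex_of_real (s y) ^ p * h y \<partial>M) \<le> d * (\<integral>y. norm (h y) \<partial>M)"
proof -
  obtain q n where approx: "\<And>u. \<bar>u\<bar> \<le> R \<Longrightarrow> \<bar>u ^ p - (\<Sum>i\<le>n. q i * u ^ (p * i + 2))\<bar> \<le> d"
    using approx_power_by_shifted_powers[OF \<open>2 \<le> p\<close> \<open>d > 0\<close>] by blast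
  define E where "E y = complex_of_real (s y ^ p - (\<Sum>i\<le>n. q i * s y ^ (p * i + 2))) * h y" for y
  have "E = (\<lambda>y. complex_of_real (s y) ^ p * h y -
      (\<Sum>i\<le>n. complex_of_real (q i) * (complex_of_real (s y) ^ (p * i + 2) * h y)))"
    by (simp add: E_def fun_eq_iff sum_distrib_left sum_distrib_right algebra_simps)
  then have "(\<integral>y. E y \<partial>M) = (\<integral>y. complex_of_real (s y) ^ p * h y \<partial>M) -
      (\<Sum>i\<le>n. complex_of_real (q i) * (\<integral>y. complex_of_real (s y) ^ (p * i + 2) * h y \<partial>M))"
    by (simp add: integrable_power_mult_bounded[OF h s bound] integrable_sum integral_sum
        Bochner_Integration.integral_diff del: power_Suc power_add)
  then have "(\<integral>y. complex_of_real (s y) ^ p * h y \<partial>M) = (\<integral>y. E y \<partial>M)"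
    by (simp only: moments) simp
  also have "norm \<dots> \<le> (\<integral>y. d * norm (h y) \<partial>M)"
  proof (rule order_trans[OF integral_norm_bound integral_mono_AE'])
    show "integrable M (\<lambda>y. d * norm (h y))"
      using h by simp
    show "AE y in M. norm (E y) \<le> d * norm (h y)"
      using bound
    proof eventually_elim
      case (elim y)
      have "norm (E y) = \<bar>s y ^ p - (\<Sum>i\<le>n. q i * s y ^ (p * i + 2))\<bar> * norm (h y)"
        unfolding E_def norm_mult norm_of_real ..
      then show ?case
        using approx[OF elim] by (simp add: mult_right_mono)
    qed
  qed (use \<open>d > 0\<close> in auto)
  finally show ?thesis
    by simp
qed

lemma integral_power_mult_eq_0:
  fixes h :: "'a \<Rightarrow> complex" and s :: "'a \<Rightarrow> real"
  assumes "integrable M h" and "s \<in> borel_measurable M" and "AE y in M. \<bar>s y\<bar> \<le> R"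
    and "2 \<le> p" and "\<And>i. (\<integral>y. complex_of_real (s y) ^ (p * i + 2) * h y \<partial>M) = 0"
  shows "(\<integral>y. complex_of_real (s y) ^ p * h y \<partial>M) = 0"
proof -
  define L where "L = (\<integral>y. norm (h y) \<partial>M)"
  have "L \<ge> 0"
    by (simp add: L_def)
  have "norm (\<integral>y. complex_of_real (s y) ^ p * h y \<partial>M) \<le> e" if "e > 0" for e
  proof -
    have "e / (L + 1) > 0"
      using \<open>e > 0\<close> \<open>L \<ge> 0\<close> by simp
    then have "norm (\<integral>y. complex_of_real (s y) ^ p * h y \<partial>M) \<le> e / (L + 1) * L"
      unfolding L_def by (rule norm_integral_power_mult_le[OF assms])
    also have "\<dots> \<le> e"
      using \<open>e > 0\<close> \<open>L \<ge> 0\<close> by (simp add: divide_simps)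
    finally show ?thesis .
  qed
  then show ?thesis
    using field_le_epsilon[of "norm (\<integral>y. complex_of_real (s y) ^ p * h y \<partial>M)" 0] by simp
qed

lemma AE_abs_inner_le_if_compact_support:
  fixes M :: "'a::euclidean_space measure"
  assumes "sets M = sets borel" and "compact K" and "emeasure M (UNIV - K) = 0"
  obtains R where "AE y in M. \<bar>a \<bullet> y\<bar> \<le> R"
proof -
  obtain B where B: "\<And>y. y \<in> K \<Longrightarrow> norm y \<le> B"
    using compact_imp_bounded[OF \<open>compact K\<close>] bounded_iff by blast
  have "UNIV - K \<in> null_sets M"
    using assms by (auto simp: null_sets_def compact_imp_closed intro: borel_open)
  then have "AE y in M. y \<in> K"
    by (rule AE_I') (use sets_eq_imp_space_eq[OF assms(1)] in auto)
  then have "AE y in M. \<bar>a \<bullet> y\<bar> \<le> norm a * B"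
  proof eventually_elim
    case (elim y)
    have "\<bar>a \<bullet> y\<bar> \<le> norm a * norm y"
      by (rule Cauchy_Schwarz_ineq2)
    also have "\<dots> \<le> norm a * B"
      using B[OF elim] by (simp add: mult_left_mono)
    finally show ?case .
  qed
  then show thesis ..
qed

lemma higher_deriv_cmult_higher_deriv:
  assumes "g holomorphic_on UNIV"
  shows "(deriv ^^ j) (\<lambda>w. C * (deriv ^^ r) g w) = (\<lambda>w. C * (deriv ^^ (j + r)) g w)"
proof
  fix w
  show "(deriv ^^ j) (\<lambda>w. C * (deriv ^^ r) g w) w = C * (deriv ^^ (j + r)) g w"
    using assms by (subst higher_deriv_cmult[of _ UNIV])
      (auto intro!: holomorphic_higher_deriv simp: funpow_add)
qed

lemma higher_deriv_power_at_0:
  "(deriv ^^ r) (\<lambda>w. w ^ k) (0::complex) = (if r = k then fact k else 0)"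
  using higher_deriv_power[of r 0 k 0]
  by (cases r k rule: linorder_cases) (auto simp: pochhammer_fact pochhammer_0_left)

lemma order_fun_pos:
  assumes "order_fun p m"
  shows "m j > 0"
proof -
  obtain c where "c > 0" and "c ^ j * Gamma (1 + real p * real j) \<le> m j"
    using assms unfolding order_fun_def by blast
  moreover have "Gamma (1 + real p * real j) > 0"
    by (intro Gamma_real_pos) (simp add: add_pos_nonneg)
  ultimately show ?thesis
    by (smt (verit) mult_pos_pos zero_less_power)
qed

definition lin_form :: "real ^ 'n \<Rightarrow> complex ^ 'n \<Rightarrow> complex" where
  "lin_form a z = (\<Sum>i\<in>UNIV. complex_of_real (a $ i) * z $ i)"

lemma lin_form_add_axis: "lin_form a (z + axis i w) = lin_form a z + complex_of_real (a $ i) * w"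
proof -
  have "lin_form a (z + axis i w) = lin_form a z +
      (\<Sum>j\<in>UNIV. complex_of_real (a $ j) * (if j = i then w else 0))"
    by (simp add: lin_form_def axis_def algebra_simps sum.distrib)
  then show ?thesis
    by (simp add: if_distrib cong: if_cong)
qed

lemma lin_form_scale: "lin_form a (c *s v) = c * lin_form a v"
  by (simp add: lin_form_def sum_distrib_left algebra_simps)

lemma lin_form_zero [simp]: "lin_form a 0 = 0"
  by (simp add: lin_form_def)

lemma lin_form_cvec: "lin_form a (t *s cvec y) = t * complex_of_real (a \<bullet> y)"
  by (simp add: lin_form_def cvec_def inner_vec_def sum_distrib_left algebra_simps)

lemma has_derivative_lin_form: "(lin_form a has_derivative lin_form a) (at z)"
  unfolding lin_form_def[abs_def]
  by (auto intro!: derivative_eq_intros bounded_linear.has_derivative[OF bounded_linear_vec_nth])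

lemma pd_comp_lin_form:
  assumes "g holomorphic_on UNIV"
  shows "pd i (\<lambda>z. g (lin_form a z)) = (\<lambda>z. complex_of_real (a $ i) * deriv g (lin_form a z))"
proof
  fix z
  have "(g has_field_derivative deriv g (lin_form a z)) (at (lin_form a z + complex_of_real (a $ i) * 0))"
    using assms by (auto intro!: holomorphic_derivI)
  then have "((\<lambda>w. g (lin_form a z + complex_of_real (a $ i) * w)) has_field_derivative
      deriv g (lin_form a z) * complex_of_real (a $ i)) (at 0)"
    by (rule DERIV_chain2) (auto intro!: derivative_eq_intros)
  then show "pd i (\<lambda>z. g (lin_form a z)) z = complex_of_real (a $ i) * deriv g (lin_form a z)"
    unfolding pd_def lin_form_add_axis by (simp add: DERIV_imp_deriv mult.commute)
qed

lemma funpow_pd_comp_lin_form: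
  assumes "g holomorphic_on UNIV"
  shows "(pd i ^^ r) (\<lambda>z. g (lin_form a z)) =
    (\<lambda>z. complex_of_real (a $ i) ^ r * (deriv ^^ r) g (lin_form a z))"
proof (induction r)
  case (Suc r)
  have "(pd i ^^ Suc r) (\<lambda>z. g (lin_form a z)) =
      pd i (\<lambda>z. (\<lambda>w. complex_of_real (a $ i) ^ r * (deriv ^^ r) g w) (lin_form a z))"
    using Suc by simp
  also have "\<dots> = (\<lambda>z. complex_of_real (a $ i) *
      deriv (\<lambda>w. complex_of_real (a $ i) ^ r * (deriv ^^ r) g w) (lin_form a z))"
    using assms by (subst pd_comp_lin_form) (auto intro!: holomorphic_intros)
  also have "\<dots> = (\<lambda>z. complex_of_real (a $ i) ^ Suc r * (deriv ^^ Suc r) g (lin_form a z))"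
    using higher_deriv_cmult_higher_deriv[OF assms, of 1] by (simp add: mult.assoc)
  finally show ?case .
qed simp

lemma foldr_pd_comp_lin_form:
  assumes "g holomorphic_on UNIV"
  shows "foldr (\<lambda>i g. (pd i ^^ \<alpha> i) g) xs (\<lambda>z. g (lin_form a z)) =
    (\<lambda>z. (\<Prod>i\<leftarrow>xs. complex_of_real (a $ i) ^ \<alpha> i) * (deriv ^^ (\<Sum>i\<leftarrow>xs. \<alpha> i)) g (lin_form a z))"
proof (induction xs)
  case (Cons x xs)
  let ?C = "\<Prod>i\<leftarrow>xs. complex_of_real (a $ i) ^ \<alpha> i" and ?r = "\<Sum>i\<leftarrow>xs. \<alpha> i"
  have "foldr (\<lambda>i g. (pd i ^^ \<alpha> i) g) (x # xs) (\<lambda>z. g (lin_form a z)) =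
      (pd x ^^ \<alpha> x) (\<lambda>z. (\<lambda>w. ?C * (deriv ^^ ?r) g w) (lin_form a z))"
    using Cons by simp
  also have "\<dots> = (\<lambda>z. complex_of_real (a $ x) ^ \<alpha> x *
      (deriv ^^ \<alpha> x) (\<lambda>w. ?C * (deriv ^^ ?r) g w) (lin_form a z))"
    using assms by (subst funpow_pd_comp_lin_form) (auto intro!: holomorphic_intros)
  finally show ?case
    by (simp add: higher_deriv_cmult_higher_deriv[OF assms] mult.assoc)
qed simp

lemma idx_list: "distinct (idx_list :: 'n::finite list)" "set (idx_list :: 'n list) = UNIV"
proof -
  have "\<exists>xs. distinct xs \<and> set xs = (UNIV :: 'n set)"
    using finite_distinct_list[of "UNIV :: 'n set"] by auto
  then show "distinct (idx_list :: 'n list)" "set (idx_list :: 'n list) = UNIV"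
    unfolding idx_list_def by (metis (mono_tags, lifting) someI_ex)+
qed

lemma mderiv_comp_lin_form:
  fixes \<alpha> :: "'n::finite \<Rightarrow> nat"
  assumes "g holomorphic_on UNIV"
  shows "mderiv \<alpha> (\<lambda>z. g (lin_form a z)) =
    (\<lambda>z. (\<Prod>i\<in>UNIV. complex_of_real (a $ i) ^ \<alpha> i) * (deriv ^^ (\<Sum>i\<in>UNIV. \<alpha> i)) g (lin_form a z))"
proof -
  have d: "distinct (idx_list :: 'n list)" and s: "set (idx_list :: 'n list) = UNIV"
    by (fact idx_list)+
  show ?thesis
    unfolding mderiv_def foldr_pd_comp_lin_form[OF assms]
      prod.distinct_set_conv_list[OF d, unfolded s] sum.distinct_set_conv_list[OF d, unfolded s] ..
qed

definition Psym :: "(('n::finite \<Rightarrow> nat) \<Rightarrow> complex) \<Rightarrow> real ^ 'n \<Rightarrow> complex" where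
  "Psym c a = (\<Sum>\<alpha>\<in>{\<alpha>. c \<alpha> \<noteq> 0}. c \<alpha> * (\<Prod>i\<in>UNIV. complex_of_real (a $ i) ^ \<alpha> i))"

lemma inj_on_base_expansion:
  fixes k :: "'n::finite \<Rightarrow> nat" and b :: nat
  assumes "inj k" and "range k = {..<N}" and digit: "\<And>\<alpha> i. \<alpha> \<in> S \<Longrightarrow> \<alpha> i < b"
  shows "inj_on (\<lambda>\<alpha>. \<Sum>i\<in>UNIV. \<alpha> i * b ^ k i) S"
proof
  have expansion: "(\<Sum>i\<in>UNIV. \<alpha> i * b ^ k i) = (\<Sum>m<N. \<alpha> (inv k m) * b ^ m)" for \<alpha> :: "'n \<Rightarrow> nat"
  proof -
    have "(\<Sum>m<N. \<alpha> (inv k m) * b ^ m) = (\<Sum>m\<in>range k. \<alpha> (inv k m) * b ^ m)"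
      by (simp only: assms(2))
    also have "\<dots> = (\<Sum>i\<in>UNIV. \<alpha> i * b ^ k i)"
      by (simp add: sum.reindex[OF \<open>inj k\<close>] inv_f_f[OF \<open>inj k\<close>])
    finally show ?thesis ..
  qed
  fix \<alpha> \<beta> assume "\<alpha> \<in> S" "\<beta> \<in> S" "(\<Sum>i\<in>UNIV. \<alpha> i * b ^ k i) = (\<Sum>i\<in>UNIV. \<beta> i * b ^ k i)"
  then have "\<alpha> (inv k (k i)) = \<beta> (inv k (k i))" for i
    using base_expansion_unique[where D = "\<lambda>m. \<alpha> (inv k m)" and D' = "\<lambda>m. \<beta> (inv k m)"
        and N = N and b = b and m = "k i"] assms(2)
    by (auto simp: digit expansion)
  then show "\<alpha> = \<beta>"
    using \<open>inj k\<close> by auto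
qed

lemma sum_distinct_powers_nonzero:
  fixes C :: "'a \<Rightarrow> complex" and e :: "'a \<Rightarrow> nat"
  assumes "finite S" and "inj_on e S" and "\<alpha> \<in> S" and "C \<alpha> \<noteq> 0"
  shows "\<exists>x::real. (\<Sum>\<beta>\<in>S. C \<beta> * complex_of_real x ^ e \<beta>) \<noteq> 0"
proof (rule ccontr)
  assume "\<not> (\<exists>x::real. (\<Sum>\<beta>\<in>S. C \<beta> * complex_of_real x ^ e \<beta>) \<noteq> 0)"
  define D where "D m = (if m \<in> e ` S then C (inv_into S e m) else 0)" for m
  define n where "n = Max (e ` S)"
  have "(\<Sum>\<beta>\<in>S. C \<beta> * z ^ e \<beta>) = (\<Sum>m\<le>n. D m * z ^ m)" for z
  proof -
    have "(\<Sum>\<beta>\<in>S. C \<beta> * z ^ e \<beta>) = (\<Sum>m\<in>e ` S. D m * z ^ m)"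
      using \<open>inj_on e S\<close> by (simp add: sum.reindex D_def)
    also have "\<dots> = (\<Sum>m\<le>n. D m * z ^ m)"
      using \<open>finite S\<close> by (intro sum.mono_neutral_left) (auto simp: n_def D_def)
    finally show ?thesis .
  qed
  then have "range complex_of_real \<subseteq> {z. (\<Sum>m\<le>n. D m * z ^ m) = 0}"
    using \<open>\<not> (\<exists>x::real. _)\<close> by auto
  moreover have "D (e \<alpha>) \<noteq> 0" and "e \<alpha> \<le> n"
    using assms by (auto simp: D_def n_def)
  then have "finite {z. (\<Sum>m\<le>n. D m * z ^ m) = 0}"
    by (intro polyfun_rootbound_finite) blast
  ultimately have "finite (range complex_of_real)"
    using finite_subset by blast
  then have "finite (UNIV :: real set)"
    using inj_of_real by (rule finite_imageD)
  then show False
    using infinite_UNIV_char_0 by blast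
qed

lemma Psym_power_substitution:
  fixes k :: "'n::finite \<Rightarrow> nat" and b :: nat
  shows "Psym c (\<chi> i. x ^ (b ^ k i)) =
    (\<Sum>\<alpha>\<in>{\<alpha>. c \<alpha> \<noteq> 0}. c \<alpha> * complex_of_real x ^ (\<Sum>i\<in>UNIV. \<alpha> i * b ^ k i))"
proof -
  have "(\<Prod>i\<in>UNIV. complex_of_real ((\<chi> i. x ^ b ^ k i) $ i) ^ \<alpha> i) =
      complex_of_real x ^ (\<Sum>i\<in>UNIV. \<alpha> i * b ^ k i)" for \<alpha> :: "'n \<Rightarrow> nat"
    unfolding power_sum by (intro prod.cong refl) (simp add: mult.commute flip: power_mult)
  then show ?thesis
    by (simp add: Psym_def)
qed

(* Kronecker substitution a_i = x^(b^(k i)): with b above every exponent, distinct monomials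
   become distinct powers of x. *)
lemma Psym_nonzero:
  fixes c :: "('n::finite \<Rightarrow> nat) \<Rightarrow> complex"
  assumes "finite {\<alpha>. c \<alpha> \<noteq> 0}" and "{\<alpha>. c \<alpha> \<noteq> 0} \<noteq> {}"
  shows "\<exists>a. Psym c a \<noteq> 0"
proof -
  obtain k :: "'n \<Rightarrow> nat" and N where "range k = {..<N}" and "inj k"
    using finite_imp_inj_to_nat_seg[of "UNIV :: 'n set"] by (auto simp: lessThan_def)
  define b where "b = Suc (\<Sum>\<alpha>\<in>{\<alpha>. c \<alpha> \<noteq> 0}. \<Sum>i\<in>UNIV. \<alpha> i)"
  have "\<alpha> i < b" if "c \<alpha> \<noteq> 0" for \<alpha> i
  proof -
    have "\<alpha> i \<le> (\<Sum>i\<in>UNIV. \<alpha> i)"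
      by (rule member_le_sum) auto
    also have "\<dots> \<le> (\<Sum>\<alpha>\<in>{\<alpha>. c \<alpha> \<noteq> 0}. \<Sum>i\<in>UNIV. \<alpha> i)"
      using assms(1) that by (intro member_le_sum) auto
    finally show ?thesis
      by (simp add: b_def)
  qed
  with \<open>inj k\<close> \<open>range k = {..<N}\<close>
  have inj: "inj_on (\<lambda>\<alpha>. \<Sum>i\<in>UNIV. \<alpha> i * b ^ k i) {\<alpha>. c \<alpha> \<noteq> 0}"
    by (intro inj_on_base_expansion) auto
  obtain \<alpha> where "\<alpha> \<in> {\<alpha>. c \<alpha> \<noteq> 0}" and "c \<alpha> \<noteq> 0"
    using assms(2) by blast
  from sum_distinct_powers_nonzero[where C = c, OF assms(1) inj this] obtain x :: real
    where "(\<Sum>\<alpha>\<in>{\<alpha>. c \<alpha> \<noteq> 0}. c \<alpha> * complex_of_real x ^ (\<Sum>i\<in>UNIV. \<alpha> i * b ^ k i)) \<noteq> 0"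
    by auto
  then show ?thesis
    by (auto simp flip: Psym_power_substitution)
qed

lemma Pop_comp_lin_form:
  assumes "g holomorphic_on UNIV" and "homog_poly p c"
  shows "Pop c (\<lambda>z. g (lin_form a z)) = (\<lambda>z. Psym c a * (deriv ^^ p) g (lin_form a z))"
proof
  fix z
  have "Pop c (\<lambda>z. g (lin_form a z)) z = (\<Sum>\<alpha>\<in>{\<alpha>. c \<alpha> \<noteq> 0}. c \<alpha> *
      ((\<Prod>i\<in>UNIV. complex_of_real (a $ i) ^ \<alpha> i) * (deriv ^^ p) g (lin_form a z)))"
    unfolding Pop_def mderiv_comp_lin_form[OF assms(1)]
    using assms(2) unfolding homog_poly_def by (intro sum.cong) auto
  then show "Pop c (\<lambda>z. g (lin_form a z)) z = Psym c a * (deriv ^^ p) g (lin_form a z)"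
    by (simp add: Psym_def sum_distrib_right mult.assoc)
qed

lemma funpow_Pop_comp_lin_form:
  assumes "g holomorphic_on UNIV" and "homog_poly p c"
  shows "(Pop c ^^ j) (\<lambda>z. g (lin_form a z)) = (\<lambda>z. Psym c a ^ j * (deriv ^^ (p * j)) g (lin_form a z))"
proof (induction j)
  case (Suc j)
  have "(Pop c ^^ Suc j) (\<lambda>z. g (lin_form a z)) =
      Pop c (\<lambda>z. (\<lambda>w. Psym c a ^ j * (deriv ^^ (p * j)) g w) (lin_form a z))"
    using Suc by simp
  also have "\<dots> = (\<lambda>z. Psym c a * (deriv ^^ p) (\<lambda>w. Psym c a ^ j * (deriv ^^ (p * j)) g w) (lin_form a z))"
    using assms by (subst Pop_comp_lin_form) (auto intro!: holomorphic_intros)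
  also have "\<dots> = (\<lambda>z. Psym c a ^ Suc j * (deriv ^^ (p * Suc j)) g (lin_form a z))"
    by (simp add: higher_deriv_cmult_higher_deriv[OF assms(1)] mult.assoc)
  finally show ?case .
qed simp

lemma funpow_Pop_lin_form_power_at_0:
  assumes "homog_poly p c"
  shows "(Pop c ^^ j) (\<lambda>z. lin_form a z ^ k) 0 = Psym c a ^ j * (if p * j = k then fact k else 0)"
proof -
  have "(\<lambda>w::complex. w ^ k) holomorphic_on UNIV"
    by (auto intro!: holomorphic_intros)
  from funpow_Pop_comp_lin_form[OF this assms] show ?thesis
    by (simp add: higher_deriv_power_at_0)
qed

lemma holo_on_lin_form_power: "holo_on (\<lambda>z. lin_form a z ^ k) UNIV"
  unfolding holo_on_def
proof (intro conjI ballI open_UNIV exI)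
  fix z
  have "((\<lambda>w. w ^ k) has_derivative (*) (of_nat k * lin_form a z ^ (k - 1))) (at (lin_form a z))"
    by (auto intro!: derivative_eq_intros has_field_derivative_imp_has_derivative)
  from has_derivative_compose[OF has_derivative_lin_form this]
  show "((\<lambda>z. lin_form a z ^ k) has_derivative (\<lambda>v. of_nat k * lin_form a z ^ (k - 1) * lin_form a v)) (at z)" .
  show "\<forall>(c::complex) v. of_nat k * lin_form a z ^ (k - 1) * lin_form a (c *s v) =
      c * (of_nat k * lin_form a z ^ (k - 1) * lin_form a v)"
    by (simp add: lin_form_scale)
qed

lemma gen_mean_lin_form_power_at_0:
  "gen_mean M h (\<lambda>z. lin_form a z ^ k) 0 t = t ^ k * (\<integral>y. complex_of_real (a \<bullet> y) ^ k * h y \<partial>M)"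
  by (simp add: gen_mean_def lin_form_cvec power_mult_distrib mult.assoc)

lemma moment_eq_if_gen_mean_series:
  fixes c :: "('n::finite \<Rightarrow> nat) \<Rightarrow> complex" and M :: "(real ^ 'n) measure"
  assumes "homog_poly p c" and "p > 0"
    and series: "\<forall>\<phi> U. 0 \<in> U \<longrightarrow> holo_on \<phi> U \<longrightarrow>
      (\<exists>\<epsilon>>0. \<forall>z t. norm z < \<epsilon> \<longrightarrow> norm t < \<epsilon> \<longrightarrow>
        (\<lambda>j. ((Pop c ^^ j) \<phi> z / complex_of_real (m j)) * t ^ (p * j)) sums gen_mean M h \<phi> z t)"
  shows "(\<integral>y. complex_of_real (a \<bullet> y) ^ k * h y \<partial>M) =
    (if p dvd k then Psym c a ^ (k div p) * fact k / complex_of_real (m (k div p)) else 0)"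
proof -
  obtain \<epsilon> where "\<epsilon> > 0" and sums_mean: "\<forall>z t. norm z < \<epsilon> \<longrightarrow> norm t < \<epsilon> \<longrightarrow>
      (\<lambda>j. ((Pop c ^^ j) (\<lambda>z. lin_form a z ^ k) z / complex_of_real (m j)) * t ^ (p * j))
        sums gen_mean M h (\<lambda>z. lin_form a z ^ k) z t"
    using series[rule_format, OF UNIV_I holo_on_lin_form_power] by blast
  define t where "t = complex_of_real (\<epsilon> / 2)"
  have "t \<noteq> 0" and "norm t < \<epsilon>"
    using \<open>\<epsilon> > 0\<close> by (auto simp: t_def)
  have "(\<lambda>j. ((Pop c ^^ j) (\<lambda>z. lin_form a z ^ k) 0 / complex_of_real (m j)) * t ^ (p * j)) =
      (\<lambda>j. if j = k div p \<and> p dvd k then Psym c a ^ j * fact k / complex_of_real (m j) * t ^ k else 0)"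
  proof
    fix j
    have "p * j = k \<longleftrightarrow> j = k div p \<and> p dvd k"
      using \<open>p > 0\<close> by auto
    then show "((Pop c ^^ j) (\<lambda>z. lin_form a z ^ k) 0 / complex_of_real (m j)) * t ^ (p * j) =
        (if j = k div p \<and> p dvd k then Psym c a ^ j * fact k / complex_of_real (m j) * t ^ k else 0)"
      by (auto simp: funpow_Pop_lin_form_power_at_0[OF assms(1)])
  qed
  then have "(\<lambda>j. ((Pop c ^^ j) (\<lambda>z. lin_form a z ^ k) 0 / complex_of_real (m j)) * t ^ (p * j)) sums
      ((if p dvd k then Psym c a ^ (k div p) * fact k / complex_of_real (m (k div p)) else 0) * t ^ k)"
    using sums_single[of "k div p" "\<lambda>j. Psym c a ^ j * fact k / complex_of_real (m j) * t ^ k"]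
    by (cases "p dvd k") auto
  with sums_mean[rule_format, of 0 t] \<open>\<epsilon> > 0\<close> \<open>norm t < \<epsilon>\<close> \<open>t \<noteq> 0\<close> show ?thesis
    by (simp add: gen_mean_lin_form_power_at_0 sums_iff)
qed

lemma Psym_eq_0_if_gen_mean_series:
  fixes c :: "('n::finite \<Rightarrow> nat) \<Rightarrow> complex" and M :: "(real ^ 'n) measure"
  assumes "p > 2" and "homog_poly p c" and "order_fun p m"
    and sets: "sets M = sets borel" and support: "compact K" "emeasure M (UNIV - K) = 0"
    and h: "integrable M h"
    and series: "\<forall>\<phi> U. 0 \<in> U \<longrightarrow> holo_on \<phi> U \<longrightarrow>
      (\<exists>\<epsilon>>0. \<forall>z t. norm z < \<epsilon> \<longrightarrow> norm t < \<epsilon> \<longrightarrow>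
        (\<lambda>j. ((Pop c ^^ j) \<phi> z / complex_of_real (m j)) * t ^ (p * j)) sums gen_mean M h \<phi> z t)"
  shows "Psym c a = 0"
proof -
  have moment: "(\<integral>y. complex_of_real (a \<bullet> y) ^ k * h y \<partial>M) =
      (if p dvd k then Psym c a ^ (k div p) * fact k / complex_of_real (m (k div p)) else 0)" for k
    using assms(1) by (intro moment_eq_if_gen_mean_series[OF assms(2) _ series]) auto
  obtain R where R: "AE y in M. \<bar>a \<bullet> y\<bar> \<le> R"
    using AE_abs_inner_le_if_compact_support[OF sets support] .
  have meas: "(\<lambda>y. a \<bullet> y) \<in> borel_measurable M"
    unfolding measurable_cong_sets[OF sets refl] by measurable
  have vanish: "(\<integral>y. complex_of_real (a \<bullet> y) ^ (p * i + 2) * h y \<partial>M) = 0" for i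
  proof -
    have "\<not> p dvd p * i + 2"
    proof
      assume "p dvd p * i + 2"
      then have "p dvd 2"
        by (simp only: dvd_add_right_iff[OF dvd_triv_left])
      with assms(1) show False
        by (auto dest: dvd_imp_le)
    qed
    then show ?thesis
      by (simp only: moment if_False)
  qed
  have "(\<integral>y. complex_of_real (a \<bullet> y) ^ p * h y \<partial>M) = 0"
    using assms(1) by (intro integral_power_mult_eq_0[OF h meas R _ vanish]) simp
  with moment[of p] assms(1) have "Psym c a * fact p / complex_of_real (m 1) = 0"
    by simp
  with order_fun_pos[OF assms(3), of 1] show "Psym c a = 0"
    by simp
qed

theorem theorem3:
  fixes c :: "('n::finite \<Rightarrow> nat) \<Rightarrow> complex" and p :: nat and m :: "nat \<Rightarrow> real"
  assumes "p > 2" and "homog_poly p c" and "order_fun p m"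
  shows "\<not> (\<exists>(M :: (real ^ 'n) measure) (h :: real ^ 'n \<Rightarrow> complex).
            finite_measure M \<and> sets M = sets borel \<and>
            (\<exists>K. compact K \<and> emeasure M (UNIV - K) = 0) \<and>
            integrable M h \<and>
            (\<forall>\<phi> U. 0 \<in> U \<longrightarrow> holo_on \<phi> U \<longrightarrow>
               (\<exists>\<epsilon>>0. \<forall>z t. norm z < \<epsilon> \<longrightarrow> norm t < \<epsilon> \<longrightarrow>
                  (\<lambda>j. ((Pop c ^^ j) \<phi> z / complex_of_real (m j)) * t ^ (p * j))
                    sums gen_mean M h \<phi> z t)))"
proof -
  obtain a where "Psym c a \<noteq> 0"
    using assms(2) Psym_nonzero unfolding homog_poly_def by blast
  then show ?thesis
    using Psym_eq_0_if_gen_mean_series[OF assms] by blast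
qed

end
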